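(* Let $C(r)=(x(r),y(r))$ be a real-analytic regular parameterization of a convex plane arc, extended holomorphically to a complex neighbourhood of its real parameter interval. For real $s,t$ with $t>0$ such that $s\pm t$ and $s\pm it$ lie in that neighbourhood, put $p(s,t)=\tfrac12(C(s+t)+C(s-t))$ and $$f(s,t)=\tfrac14\int_{s-t}^{s+t}[C(r)-p(s,t),C'(r)]\,dr,$$ so that $f(s,t)$ is the inner area distance at $p(s,t)$, and let $f(s,it)$ denote its holomorphic continuation in the second variable (the integral taken along the segment from $s-it$ to $s+it$). Set $P(s,t)=\tfrac12(C(s+it)+C(s-it))$ and $F(s,t)=i\,f(s,it)$. Then $F(s,t)$ is real, and, writing $G(s,t)=\tfrac{i}{2}R\big(C(s+it)-C(s-it)\big)$ (a real vector), one has $F_s=\langle G,P_s\rangle$ and $F_t=\langle G,P_t\rangle$; that is, regarded as a function of the planar point $P$, $\nabla F=iR\big(\tfrac{C(z)-C(\overline{z})}{2}\big)$ with $z=s+it$.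
   Context: $[X,Y]$ denotes the determinant of the $2\times2$ matrix with columns $X,Y$, extended bilinearly to complex vectors; $R$ is the counterclockwise rotation by ninety degrees, $R(a,b)=(-b,a)$. The curve is oriented so that, for the inner area distance, the minimal chord through $p(s,t)$ has extremities $C(s-t)$, $C(s+t)$ and the formula for $f(s,t)$ above holds. *)

theory Defs
  imports "HOL-Complex_Analysis.Complex_Analysis"
begin

definition det2 :: "complex \<times> complex \<Rightarrow> complex \<times> complex \<Rightarrow> complex" where
  "det2 X Y = fst X * snd Y - snd X * fst Y"

definition rot90 :: "complex \<times> complex \<Rightarrow> complex \<times> complex" where
  "rot90 X = (- snd X, fst X)"

text \<open>The curve C = (x,y) as a pair of holomorphic functions.  Regularity and
 convexity of the real arc C restricted to [a,b]: the arc lies (weakly) on one side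
 of each of its tangent lines.\<close>
definition regular_arc :: "(complex \<Rightarrow> complex) \<Rightarrow> (complex \<Rightarrow> complex) \<Rightarrow> real \<Rightarrow> real \<Rightarrow> bool" where
  "regular_arc x y a b \<longleftrightarrow>
     (\<forall>r\<in>{a..b}. (deriv x (of_real r), deriv y (of_real r)) \<noteq> (0, 0))"

definition convex_arc :: "(complex \<Rightarrow> complex) \<Rightarrow> (complex \<Rightarrow> complex) \<Rightarrow> real \<Rightarrow> real \<Rightarrow> bool" where
  "convex_arc x y a b \<longleftrightarrow>
     (\<forall>r\<in>{a..b}.
        (\<forall>r'\<in>{a..b}. Re (det2 (x (of_real r') - x (of_real r), y (of_real r') - y (of_real r))
                                (deriv x (of_real r), deriv y (of_real r))) \<ge> 0)
      \<or> (\<forall>r'\<in>{a..b}. Re (det2 (x (of_real r') - x (of_real r), y (of_real r') - y (of_real r))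
                                (deriv x (of_real r), deriv y (of_real r))) \<le> 0))"

text \<open>f(s,w) = 1/4 \<integral>_{s-w}^{s+w} [C(r) - p, C'(r)] dr along the segment from s-w to s+w,
 with p = (C(s+w) + C(s-w))/2.  For real w = t this is the inner area distance;
 for w = i t it is the holomorphic continuation f(s,it).\<close>
definition area_f :: "(complex \<Rightarrow> complex) \<Rightarrow> (complex \<Rightarrow> complex) \<Rightarrow> real \<Rightarrow> complex \<Rightarrow> complex" where
  "area_f x y s w =
     (let px = (x (of_real s + w) + x (of_real s - w)) / 2;
          py = (y (of_real s + w) + y (of_real s - w)) / 2
      in contour_integral (linepath (of_real s - w) (of_real s + w))
           (\<lambda>r. det2 (x r - px, y r - py) (deriv x r, deriv y r)) / 4)"

definition bigF :: "(complex \<Rightarrow> complex) \<Rightarrow> (complex \<Rightarrow> complex) \<Rightarrow> real \<Rightarrow> real \<Rightarrow> complex" where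
  "bigF x y s t = \<i> * area_f x y s (\<i> * of_real t)"

definition bigP :: "(complex \<Rightarrow> complex) \<Rightarrow> (complex \<Rightarrow> complex) \<Rightarrow> real \<Rightarrow> real \<Rightarrow> complex \<times> complex" where
  "bigP x y s t =
     ((x (Complex s t) + x (Complex s (-t))) / 2, (y (Complex s t) + y (Complex s (-t))) / 2)"

definition bigG :: "(complex \<Rightarrow> complex) \<Rightarrow> (complex \<Rightarrow> complex) \<Rightarrow> real \<Rightarrow> real \<Rightarrow> complex \<times> complex" where
  "bigG x y s t =
     (let R = rot90 (x (Complex s t) - x (Complex s (-t)), y (Complex s t) - y (Complex s (-t)))
      in (\<i> / 2 * fst R, \<i> / 2 * snd R))"

definition pair2 :: "complex \<times> complex \<Rightarrow> complex \<times> complex \<Rightarrow> complex" where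
  "pair2 X Y = fst X * fst Y + snd X * snd Y"

end

theory Submission
  imports Defs
begin

text \<open>On a convex neighbourhood of the chord, the holomorphic function \<open>[C, C'] = x y' - y x'\<close> has a
  primitive \<open>H\<close>. Since \<open>[p, C']\<close> is the derivative of \<open>[p, C]\<close>, integrating \<open>[C - p, C']\<close> along the
  chord gives the closed form \<open>4 f(s, w) = H(s + w) - H(s - w) + [C(s + w), C(s - w)]\<close>, holomorphic in
  both endpoints. Differentiating it, the terms combine (bilinearly, for any motion of the two endpoints)
  into \<open>\<langle>iR((C(z) - C(w))/2), d((C(z) + C(w))/2)\<rangle>\<close>. Reality comes from Schwarz reflection:
  \<open>C(cnj z) = cnj (C z)\<close>, so \<open>[C, C']\<close> commutes with conjugation, \<open>Re H(cnj z) = Re H(z)\<close>, and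
  \<open>4 f(s, it)\<close> is purely imaginary.\<close>

definition wronskian :: "(complex \<Rightarrow> complex) \<Rightarrow> (complex \<Rightarrow> complex) \<Rightarrow> complex \<Rightarrow> complex" where
  "wronskian x y z = x z * deriv y z - y z * deriv x z"

definition primitive_area ::
    "(complex \<Rightarrow> complex) \<Rightarrow> (complex \<Rightarrow> complex) \<Rightarrow> (complex \<Rightarrow> complex) \<Rightarrow> complex \<Rightarrow> complex \<Rightarrow> complex"
  where "primitive_area H x y z w = (H z - H w + x z * y w - x w * y z) / 4"

lemma area_f_eq_primitive_area:
  assumes "\<And>z. z \<in> closed_segment (of_real s - w) (of_real s + w) \<Longrightarrow>
      (H has_field_derivative wronskian x y z) (at z)
      \<and> x field_differentiable at z \<and> y field_differentiable at z"
  shows "area_f x y s w = primitive_area H x y (of_real s + w) (of_real s - w)"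
proof -
  define z1 where "z1 = of_real s + w"
  define z2 where "z2 = of_real s - w"
  define px where "px = (x z1 + x z2) / 2"
  define py where "py = (y z1 + y z2) / 2"
  define Q where "Q r = H r - px * y r + py * x r" for r
  have "(Q has_field_derivative det2 (x r - px, y r - py) (deriv x r, deriv y r))
      (at r within closed_segment z2 z1)" if "r \<in> closed_segment z2 z1" for r
  proof -
    from assms[of r] that have "(H has_field_derivative wronskian x y r) (at r)"
      and "(x has_field_derivative deriv x r) (at r)" "(y has_field_derivative deriv y r) (at r)"
      by (auto simp: z1_def z2_def DERIV_deriv_iff_field_differentiable)
    then have "(Q has_field_derivative wronskian x y r - px * deriv y r + py * deriv x r) (at r)"
      unfolding Q_def[abs_def] by (intro DERIV_add DERIV_diff DERIV_cmult)
    then show ?thesis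
      by (simp add: has_field_derivative_at_within wronskian_def det2_def algebra_simps)
  qed
  then have ci: "contour_integral (linepath z2 z1)
      (\<lambda>r. det2 (x r - px, y r - py) (deriv x r, deriv y r)) = Q z1 - Q z2"
    by (intro contour_integral_unique contour_integral_primitive[where S = "closed_segment z2 z1",
          of _ _ "linepath z2 z1", simplified]) auto
  have "area_f x y s w = (Q z1 - Q z2) / 4"
    unfolding area_f_def Let_def z1_def[symmetric] z2_def[symmetric] px_def[symmetric]
      py_def[symmetric] ci ..
  also have "Q z1 - Q z2 = H z1 - H z2 + x z1 * y z2 - x z2 * y z1"
    by (simp add: Q_def px_def py_def field_simps)
  finally show ?thesis
    by (simp add: primitive_area_def z1_def z2_def)
qed

lemma has_vector_derivative_Complex_Re: "((\<lambda>\<sigma>. Complex \<sigma> c) has_vector_derivative 1) (at s)"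
proof -
  have "(\<lambda>\<sigma>. Complex \<sigma> c) = (\<lambda>\<sigma>. of_real \<sigma> + Complex 0 c)"
    by (auto simp: complex_eq_iff)
  then show ?thesis by (auto intro!: derivative_eq_intros)
qed

lemma has_vector_derivative_Complex_Im: "((\<lambda>\<tau>. Complex c \<tau>) has_vector_derivative \<i>) (at t)"
proof -
  have "(\<lambda>\<tau>. Complex c \<tau>) = (\<lambda>\<tau>. of_real c + \<i> * of_real \<tau>)"
    by (auto simp: complex_eq_iff)
  then show ?thesis by (auto intro!: derivative_eq_intros)
qed

lemma has_vector_derivative_Complex_uminus_Im:
  "((\<lambda>\<tau>. Complex c (-\<tau>)) has_vector_derivative - \<i>) (at t)"
proof -
  have "(\<lambda>\<tau>. Complex c (-\<tau>)) = (\<lambda>\<tau>. of_real c - \<i> * of_real \<tau>)"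
    by (auto simp: complex_eq_iff)
  then show ?thesis by (auto intro!: derivative_eq_intros)
qed

lemma has_vector_derivative_comp_holomorphic:
  assumes "(A has_vector_derivative A') (at u)" "f holomorphic_on S" "open S" "A u \<in> S"
  shows "((\<lambda>v. f (A v)) has_vector_derivative A' * deriv f (A u)) (at u)"
  using field_vector_diff_chain_at[OF assms(1) holomorphic_derivI[OF assms(2-4)]]
  by (simp add: o_def)

lemma primitive_area_has_vector_derivative:
  fixes A B :: "real \<Rightarrow> complex"
  assumes A: "(A has_vector_derivative A') (at u)" and B: "(B has_vector_derivative B') (at u)"
    and S: "open S" "A u \<in> S" "B u \<in> S" "x holomorphic_on S" "y holomorphic_on S"
    and H: "\<And>z. z \<in> S \<Longrightarrow> (H has_field_derivative wronskian x y z) (at z)"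
  shows "((\<lambda>v. \<i> * primitive_area H x y (A v) (B v)) has_vector_derivative
      pair2 (- \<i> / 2 * (y (A u) - y (B u)), \<i> / 2 * (x (A u) - x (B u)))
        (vector_derivative (\<lambda>v. (x (A v) + x (B v)) / 2) (at u),
         vector_derivative (\<lambda>v. (y (A v) + y (B v)) / 2) (at u))) (at u)"
proof -
  note xA = has_vector_derivative_comp_holomorphic[OF A S(4,1,2)]
  note xB = has_vector_derivative_comp_holomorphic[OF B S(4,1,3)]
  note yA = has_vector_derivative_comp_holomorphic[OF A S(5,1,2)]
  note yB = has_vector_derivative_comp_holomorphic[OF B S(5,1,3)]
  note HA = field_vector_diff_chain_at[OF A H[OF S(2)], unfolded o_def]
  note HB = field_vector_diff_chain_at[OF B H[OF S(3)], unfolded o_def]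
  have "((\<lambda>v. (x (A v) + x (B v)) / 2) has_vector_derivative
      (A' * deriv x (A u) + B' * deriv x (B u)) / 2) (at u)"
    using xA xB by (intro has_vector_derivative_divide has_vector_derivative_add)
  moreover have "((\<lambda>v. (y (A v) + y (B v)) / 2) has_vector_derivative
      (A' * deriv y (A u) + B' * deriv y (B u)) / 2) (at u)"
    using yA yB by (intro has_vector_derivative_divide has_vector_derivative_add)
  moreover have "((\<lambda>v. \<i> * primitive_area H x y (A v) (B v)) has_vector_derivative
      pair2 (- \<i> / 2 * (y (A u) - y (B u)), \<i> / 2 * (x (A u) - x (B u)))
        ((A' * deriv x (A u) + B' * deriv x (B u)) / 2,
         (A' * deriv y (A u) + B' * deriv y (B u)) / 2)) (at u)"
    unfolding primitive_area_def
    by (rule has_vector_derivative_eq_rhs, (rule has_vector_derivative_mult_right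
          has_vector_derivative_divide has_vector_derivative_add has_vector_derivative_diff
          has_vector_derivative_mult HA HB xA xB yA yB)+)
      (simp add: pair2_def wronskian_def field_simps)
  ultimately show ?thesis by (simp add: vector_derivative_at)
qed

lemma islimpt_of_real_interval:
  assumes "a < b"
  shows "of_real a islimpt (of_real ` {a..b} :: complex set)"
  unfolding islimpt_approachable
proof (intro allI impI)
  fix e :: real
  assume "e > 0"
  define r where "r = a + min (e / 2) (b - a)"
  have "r \<in> {a..b}" "r \<noteq> a" "dist r a < e"
    using \<open>e > 0\<close> assms by (auto simp: r_def dist_real_def min_def)
  then show "\<exists>z\<in>of_real ` {a..b}. z \<noteq> of_real a \<and> dist z (complex_of_real a) < e"
    by (intro bexI[of _ "of_real r"]) auto
qed

text \<open>Schwarz reflection: \<open>cnj \<circ> f \<circ> cnj\<close> and \<open>f\<close> agree on the real interval, hence on \<open>U\<close> by the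
  identity theorem.\<close>
lemma holomorphic_real_on_interval_cnj:
  fixes f :: "complex \<Rightarrow> complex"
  assumes "open U" "connected U" "cnj ` U = U" "a < b" "of_real ` {a..b} \<subseteq> U"
    and "f holomorphic_on U" "\<forall>r\<in>{a..b}. f (of_real r) \<in> \<real>" "z \<in> U"
  shows "f (cnj z) = cnj (f z)"
proof -
  have "cnj \<circ> f \<circ> cnj holomorphic_on U"
    by (rule holomorphic_on_compose_cnj_cnj) (use assms in auto)
  then have "(\<lambda>w. cnj (f (cnj w)) - f w) holomorphic_on U"
    using holomorphic_on_diff assms(6) by (auto simp: o_def)
  then have "cnj (f (cnj z)) - f z = 0"
    by (rule analytic_continuation[OF _ assms(1,2,5) _ islimpt_of_real_interval[OF assms(4)]])
      (use assms in \<open>auto simp: Reals_cnj_iff\<close>)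
  then show ?thesis
    by (metis complex_cnj_cnj eq_iff_diff_eq_0)
qed

lemma deriv_holomorphic_real_on_interval_cnj:
  fixes f :: "complex \<Rightarrow> complex"
  assumes "open U" "connected U" "cnj ` U = U" "a < b" "of_real ` {a..b} \<subseteq> U"
    and "f holomorphic_on U" "\<forall>r\<in>{a..b}. f (of_real r) \<in> \<real>" "z \<in> U"
  shows "deriv f (cnj z) = cnj (deriv f z)"
proof -
  have "cnj z \<in> U"
    using assms(3,8) by force
  have "(f has_field_derivative deriv f z) (at (cnj (cnj z)))"
    using holomorphic_derivI[OF assms(6,1,8)] by simp
  then have "((cnj \<circ> f \<circ> cnj) has_field_derivative cnj (deriv f z)) (at (cnj z))"
    by (rule has_field_derivative_cnj_cnj)
  then have "(f has_field_derivative cnj (deriv f z)) (at (cnj z))"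
    by (rule has_field_derivative_transform_within_open[OF _ assms(1) \<open>cnj z \<in> U\<close>])
      (use holomorphic_real_on_interval_cnj[OF assms(1-7)] in simp)
  then show ?thesis
    by (rule DERIV_imp_deriv)
qed

lemma Re_primitive_cnj_eq:
  assumes "convex S" "\<And>z. z \<in> S \<Longrightarrow> cnj z \<in> S"
    and H: "\<And>z. z \<in> S \<Longrightarrow> (H has_field_derivative g z) (at z)"
    and "\<And>z. z \<in> S \<Longrightarrow> g (cnj z) = cnj (g z)" and "z \<in> S"
  shows "Re (H (cnj z)) = Re (H z)"
proof -
  have "((\<lambda>w. cnj (H (cnj w)) - H w) has_field_derivative 0) (at w within S)" if "w \<in> S" for w
  proof -
    have "((cnj \<circ> H \<circ> cnj) has_field_derivative cnj (g (cnj w))) (at w)"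
      using has_field_derivative_cnj_cnj[of H "g (cnj w)" w] H assms(2) that by blast
    then have "((\<lambda>w. cnj (H (cnj w)) - H w) has_field_derivative g w - g w) (at w)"
      using assms(4)[OF that] H[OF that] by (intro DERIV_diff) (simp_all add: o_def)
    then show ?thesis
      by (simp add: has_field_derivative_at_within)
  qed
  then obtain c where "\<forall>w\<in>S. cnj (H (cnj w)) - H w = c"
    using has_field_derivative_zero_constant[OF assms(1)] by blast
  then have "cnj (H (cnj z)) - H z = cnj (H z) - H (cnj z)"
    using assms(2,5) by (metis complex_cnj_cnj)
  then show ?thesis
    by (simp add: complex_eq_iff)
qed

lemma primitive_area_cnj_Reals:
  assumes "Re (H (cnj z)) = Re (H z)" "x (cnj z) = cnj (x z)" "y (cnj z) = cnj (y z)"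
  shows "\<i> * primitive_area H x y z (cnj z) \<in> \<real>"
  using assms by (simp add: primitive_area_def complex_is_Real_iff)

lemma vertical_segment_box_subset:
  assumes "open U" "t > 0" and K: "closed_segment (Complex s (-t)) (Complex s t) \<subseteq> U"
  obtains d where "d > 0" "box (Complex (s - d) (-(t + d))) (Complex (s + d) (t + d)) \<subseteq> U"
proof -
  obtain e where "e > 0" and e: "(\<Union>k\<in>closed_segment (Complex s (-t)) (Complex s t). ball k e) \<subseteq> U"
    using compact_subset_open_imp_ball_epsilon_subset[OF compact_segment assms(1) K] .
  have "z \<in> U" if z: "z \<in> box (Complex (s - e/2) (-(t + e/2))) (Complex (s + e/2) (t + e/2))" for z
  proof -
    have "s - e/2 < Re z" "Re z < s + e/2" "-(t + e/2) < Im z" "Im z < t + e/2"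
      using z by (simp_all add: in_box_complex_iff)
    then have Re_z: "\<bar>Re z - s\<bar> < e/2" and Im_z: "\<bar>Im z\<bar> < t + e/2"
      by linarith+
    define \<tau> where "\<tau> = max (-t) (min t (Im z))"
    have \<tau>: "-t \<le> \<tau>" "\<tau> \<le> t" "\<bar>Im z - \<tau>\<bar> < e/2"
      using \<open>t > 0\<close> \<open>e > 0\<close> Im_z unfolding \<tau>_def by linarith+
    define u where "u = (\<tau> + t) / (2 * t)"
    have "2 * t * u = \<tau> + t"
      using \<open>t > 0\<close> by (simp add: u_def)
    then have "Complex s \<tau> = (1 - u) *\<^sub>R Complex s (-t) + u *\<^sub>R Complex s t"
      by (simp add: complex_eq_iff algebra_simps)
    moreover have "0 \<le> u" "u \<le> 1"
      using \<open>t > 0\<close> \<tau> by (simp_all add: u_def)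
    ultimately have "Complex s \<tau> \<in> closed_segment (Complex s (-t)) (Complex s t)"
      unfolding in_segment by blast
    moreover have "dist (Complex s \<tau>) z \<le> \<bar>Re z - s\<bar> + \<bar>Im z - \<tau>\<bar>"
      using cmod_le[of "z - Complex s \<tau>"] by (simp add: dist_norm norm_minus_commute)
    ultimately show "z \<in> U"
      using e Re_z \<tau>(3) by fastforce
  qed
  then show thesis
    using that[of "e/2"] \<open>e > 0\<close> by auto
qed

lemma bigF_local_primitive_area:
  assumes "open U" "x holomorphic_on U" "y holomorphic_on U" "t > 0"
    and "closed_segment (Complex s (-t)) (Complex s t) \<subseteq> U"
  obtains R d H where "open R" "convex R" "R \<subseteq> U" "\<And>z. z \<in> R \<Longrightarrow> cnj z \<in> R"
    "Complex s t \<in> R" "d > 0"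
    "\<And>z. z \<in> R \<Longrightarrow> (H has_field_derivative wronskian x y z) (at z)"
    "\<And>\<sigma> \<tau>. \<bar>\<sigma> - s\<bar> < d \<Longrightarrow> \<bar>\<tau> - t\<bar> < d \<Longrightarrow>
       bigF x y \<sigma> \<tau> = \<i> * primitive_area H x y (Complex \<sigma> \<tau>) (Complex \<sigma> (-\<tau>))"
proof -
  obtain d where "d > 0" and RU: "box (Complex (s - d) (-(t + d))) (Complex (s + d) (t + d)) \<subseteq> U"
    using vertical_segment_box_subset[OF assms(1,4,5)] .
  define R where "R = box (Complex (s - d) (-(t + d))) (Complex (s + d) (t + d))"
  have "open R" "convex R"
    by (simp_all add: R_def open_box convex_box)
  have R_iff: "z \<in> R \<longleftrightarrow> \<bar>Re z - s\<bar> < d \<and> \<bar>Im z\<bar> < t + d" for z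
    by (auto simp: R_def in_box_complex_iff)
  have "(\<lambda>z. wronskian x y z) holomorphic_on R"
    using RU assms(1-3) unfolding wronskian_def R_def
    by (intro holomorphic_intros holomorphic_deriv) (auto intro: holomorphic_on_subset)
  then obtain H where "\<And>z. z \<in> R \<Longrightarrow> (H has_field_derivative wronskian x y z) (at z within R)"
    using holomorphic_convex_primitive'[OF \<open>convex R\<close> \<open>open R\<close>] by blast
  then have H: "(H has_field_derivative wronskian x y z) (at z)" if "z \<in> R" for z
    using that at_within_open[OF that \<open>open R\<close>] by metis
  have "bigF x y \<sigma> \<tau> = \<i> * primitive_area H x y (Complex \<sigma> \<tau>) (Complex \<sigma> (-\<tau>))"
    if "\<bar>\<sigma> - s\<bar> < d" "\<bar>\<tau> - t\<bar> < d" for \<sigma> \<tau>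
  proof -
    have eqs: "of_real \<sigma> + \<i> * of_real \<tau> = Complex \<sigma> \<tau>"
      "of_real \<sigma> - \<i> * of_real \<tau> = Complex \<sigma> (-\<tau>)"
      by (simp_all add: complex_eq_iff)
    have "closed_segment (Complex \<sigma> (-\<tau>)) (Complex \<sigma> \<tau>) \<subseteq> R"
      using that \<open>t > 0\<close> by (intro closed_segment_subset \<open>convex R\<close>) (auto simp: R_iff)
    moreover have "x field_differentiable at z" "y field_differentiable at z" if "z \<in> R" for z
      using that RU assms(1-3) by (auto simp: R_def intro: holomorphic_on_imp_differentiable_at)
    ultimately have "area_f x y \<sigma> (\<i> * of_real \<tau>)
        = primitive_area H x y (Complex \<sigma> \<tau>) (Complex \<sigma> (-\<tau>))"
      unfolding eqs[symmetric] by (intro area_f_eq_primitive_area) (use H in blast)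
    then show ?thesis
      by (simp add: bigF_def)
  qed
  moreover have "cnj z \<in> R" if "z \<in> R" for z
    using that by (simp add: R_iff)
  moreover have "Complex s t \<in> R"
    using \<open>t > 0\<close> \<open>d > 0\<close> by (simp add: R_iff)
  ultimately show thesis
    using that[OF \<open>open R\<close> \<open>convex R\<close> RU[folded R_def] _ _ \<open>d > 0\<close> H] by blast
qed

lemma bigG_eq:
  "bigG x y s t = (- \<i> / 2 * (y (Complex s t) - y (Complex s (-t))),
     \<i> / 2 * (x (Complex s t) - x (Complex s (-t))))"
  by (simp add: bigG_def rot90_def field_simps)

lemma bigF_has_vector_derivative_Re:
  assumes "open S" "x holomorphic_on S" "y holomorphic_on S" "Complex s t \<in> S" "Complex s (-t) \<in> S"
    and "\<And>z. z \<in> S \<Longrightarrow> (H has_field_derivative wronskian x y z) (at z)"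
    and "d > 0" "\<And>\<sigma>. \<bar>\<sigma> - s\<bar> < d \<Longrightarrow>
      bigF x y \<sigma> t = \<i> * primitive_area H x y (Complex \<sigma> t) (Complex \<sigma> (-t))"
  shows "((\<lambda>\<sigma>. bigF x y \<sigma> t) has_vector_derivative
      pair2 (bigG x y s t)
        (vector_derivative (\<lambda>\<sigma>. fst (bigP x y \<sigma> t)) (at s),
         vector_derivative (\<lambda>\<sigma>. snd (bigP x y \<sigma> t)) (at s))) (at s)"
proof -
  have "((\<lambda>\<sigma>. \<i> * primitive_area H x y (Complex \<sigma> t) (Complex \<sigma> (-t))) has_vector_derivative
      pair2 (bigG x y s t)
        (vector_derivative (\<lambda>\<sigma>. fst (bigP x y \<sigma> t)) (at s),
         vector_derivative (\<lambda>\<sigma>. snd (bigP x y \<sigma> t)) (at s))) (at s)"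
    unfolding bigG_eq bigP_def fst_conv snd_conv
    by (rule primitive_area_has_vector_derivative[OF has_vector_derivative_Complex_Re
          has_vector_derivative_Complex_Re assms(1,4,5,2,3,6)])
  then show ?thesis
    by (rule has_vector_derivative_transform_within_open[where S = "ball s d"])
      (use assms(7,8) in \<open>auto simp: dist_real_def\<close>)
qed

lemma bigF_has_vector_derivative_Im:
  assumes "open S" "x holomorphic_on S" "y holomorphic_on S" "Complex s t \<in> S" "Complex s (-t) \<in> S"
    and "\<And>z. z \<in> S \<Longrightarrow> (H has_field_derivative wronskian x y z) (at z)"
    and "d > 0" "\<And>\<tau>. \<bar>\<tau> - t\<bar> < d \<Longrightarrow>
      bigF x y s \<tau> = \<i> * primitive_area H x y (Complex s \<tau>) (Complex s (-\<tau>))"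
  shows "((\<lambda>\<tau>. bigF x y s \<tau>) has_vector_derivative
      pair2 (bigG x y s t)
        (vector_derivative (\<lambda>\<tau>. fst (bigP x y s \<tau>)) (at t),
         vector_derivative (\<lambda>\<tau>. snd (bigP x y s \<tau>)) (at t))) (at t)"
proof -
  have "((\<lambda>\<tau>. \<i> * primitive_area H x y (Complex s \<tau>) (Complex s (-\<tau>))) has_vector_derivative
      pair2 (bigG x y s t)
        (vector_derivative (\<lambda>\<tau>. fst (bigP x y s \<tau>)) (at t),
         vector_derivative (\<lambda>\<tau>. snd (bigP x y s \<tau>)) (at t))) (at t)"
    unfolding bigG_eq bigP_def fst_conv snd_conv
    by (rule primitive_area_has_vector_derivative[OF has_vector_derivative_Complex_Im
          has_vector_derivative_Complex_uminus_Im assms(1,4,5,2,3,6)])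
  then show ?thesis
    by (rule has_vector_derivative_transform_within_open[where S = "ball t d"])
      (use assms(7,8) in \<open>auto simp: dist_real_def\<close>)
qed

theorem mainTheorem6:
  fixes x y :: "complex \<Rightarrow> complex" and U :: "complex set" and a b s t :: real
  assumes "open U" and "connected U" and "cnj ` U = U"
    and "a < b" and "of_real ` {a..b} \<subseteq> U"
    and "x holomorphic_on U" and "y holomorphic_on U"
    and "\<forall>r\<in>{a..b}. x (of_real r) \<in> \<real> \<and> y (of_real r) \<in> \<real>"
    and "regular_arc x y a b" and "convex_arc x y a b"
    and "t > 0"
    and "of_real (s + t) \<in> U" and "of_real (s - t) \<in> U"
    and "closed_segment (Complex s (-t)) (Complex s t) \<subseteq> U"
  shows "bigF x y s t \<in> \<real>
    \<and> fst (bigG x y s t) \<in> \<real> \<and> snd (bigG x y s t) \<in> \<real>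
    \<and> ((\<lambda>\<sigma>. bigF x y \<sigma> t) has_vector_derivative
           pair2 (bigG x y s t)
             (vector_derivative (\<lambda>\<sigma>. fst (bigP x y \<sigma> t)) (at s),
              vector_derivative (\<lambda>\<sigma>. snd (bigP x y \<sigma> t)) (at s))) (at s)
    \<and> ((\<lambda>\<tau>. bigF x y s \<tau>) has_vector_derivative
           pair2 (bigG x y s t)
             (vector_derivative (\<lambda>\<tau>. fst (bigP x y s \<tau>)) (at t),
              vector_derivative (\<lambda>\<tau>. snd (bigP x y s \<tau>)) (at t))) (at t)"
proof -
  obtain R d H where R: "open R" "convex R" "R \<subseteq> U" "\<And>z. z \<in> R \<Longrightarrow> cnj z \<in> R"
    and "Complex s t \<in> R" "d > 0"
    and H: "\<And>z. z \<in> R \<Longrightarrow> (H has_field_derivative wronskian x y z) (at z)"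
    and F_eq: "\<And>\<sigma> \<tau>. \<bar>\<sigma> - s\<bar> < d \<Longrightarrow> \<bar>\<tau> - t\<bar> < d \<Longrightarrow>
      bigF x y \<sigma> \<tau> = \<i> * primitive_area H x y (Complex \<sigma> \<tau>) (Complex \<sigma> (-\<tau>))"
    using bigF_local_primitive_area[OF assms(1,6,7,11,14)] by blast
  have cnj_st: "cnj (Complex s t) = Complex s (-t)"
    by (simp add: complex_eq_iff)
  have "Complex s (-t) \<in> R" "Complex s t \<in> U"
    using R(3) R(4)[of "Complex s t"] \<open>Complex s t \<in> R\<close> unfolding cnj_st by auto
  have xy_R: "x holomorphic_on R" "y holomorphic_on R"
    using R(3) assms(6,7) by (auto intro: holomorphic_on_subset)
  have xy_cnj: "x (cnj w) = cnj (x w)" "y (cnj w) = cnj (y w)"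
      "wronskian x y (cnj w) = cnj (wronskian x y w)" if "w \<in> U" for w
    using assms(8) that holomorphic_real_on_interval_cnj[OF assms(1-6)]
      holomorphic_real_on_interval_cnj[OF assms(1-5,7)]
      deriv_holomorphic_real_on_interval_cnj[OF assms(1-6)]
      deriv_holomorphic_real_on_interval_cnj[OF assms(1-5,7)]
    by (simp_all add: wronskian_def)
  have "bigF x y s t = \<i> * primitive_area H x y (Complex s t) (cnj (Complex s t))"
    unfolding cnj_st using F_eq[of s t] \<open>d > 0\<close> by simp
  also have "\<dots> \<in> \<real>"
    using R(3) xy_cnj \<open>Complex s t \<in> U\<close> \<open>Complex s t \<in> R\<close>
    by (intro primitive_area_cnj_Reals Re_primitive_cnj_eq[OF R(2,4) H]) auto
  finally have "bigF x y s t \<in> \<real>" .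
  moreover have "fst (bigG x y s t) \<in> \<real>" "snd (bigG x y s t) \<in> \<real>"
    unfolding bigG_eq cnj_st[symmetric] using xy_cnj \<open>Complex s t \<in> U\<close>
    by (simp_all add: complex_is_Real_iff)
  moreover note bigF_has_vector_derivative_Re[OF R(1) xy_R \<open>Complex s t \<in> R\<close>
      \<open>Complex s (-t) \<in> R\<close> H \<open>d > 0\<close>] F_eq[of _ t]
    and bigF_has_vector_derivative_Im[OF R(1) xy_R \<open>Complex s t \<in> R\<close>
      \<open>Complex s (-t) \<in> R\<close> H \<open>d > 0\<close>] F_eq[of s]
  ultimately show ?thesis
    using \<open>d > 0\<close> by simp
qed

end
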